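(* Let $\Sigma=\{0,1\}$. The map $\mathrm{val}_{\mathcal{F}c}$ restricted to $D=\Sigma(\Sigma\Sigma)^*\setminus\left(\Sigma^*11\Sigma^*\cup000\Sigma^*\cup101\Sigma^*\right)$ is a bijection $D\to\mathbb{Z}$.
   Context: Fibonacci numbers: $F_0=1$, $F_1=2$, $F_n=F_{n-1}+F_{n-2}$ for $n\ge2$. For a nonempty binary word $w=w_{k-1}\cdots w_0$ (digits indexed from the right, $w_0$ is the last letter), $\mathrm{val}_{\mathcal{F}c}(w)=\sum_{i=0}^{k-1}w_iF_i-w_{k-1}F_k$. *)

theory Defs
  imports Main
begin

fun fibc :: "nat \<Rightarrow> int" where
  "fibc 0 = 1"
| "fibc (Suc 0) = 2"
| "fibc (Suc (Suc n)) = fibc (Suc n) + fibc n"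

text \<open>A binary word w = w_{k-1} ... w_0 is a list of naturals (digits 0/1), written left to right,
  so the list element at position j is the digit w_{k-1-j}.\<close>
definition digit :: "nat list \<Rightarrow> nat \<Rightarrow> int" where
  "digit w i = int (w ! (length w - 1 - i))"

definition valFc :: "nat list \<Rightarrow> int" where
  "valFc w = (\<Sum>i<length w. digit w i * fibc i) - digit w (length w - 1) * fibc (length w)"

definition Dset :: "nat list set" where
  "Dset = {w. set w \<subseteq> {0, 1} \<and> odd (length w)
              \<and> \<not> (\<exists>u v. w = u @ [1, 1] @ v)
              \<and> \<not> (\<exists>v. w = [0, 0, 0] @ v)
              \<and> \<not> (\<exists>v. w = [1, 0, 1] @ v)}"

end

theory Submission
  imports Defs
begin

text \<open>Words of length \<open>n\<close> without the factor 11 are Zeckendorf representations: their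
  ordinary Fibonacci value \<open>valF\<close> runs bijectively over \<open>[0, F n)\<close>. For \<open>w = a u\<close> one has
  \<open>valFc w = valF w - a F |w|\<close>, so among words of one fixed length the leading letter is the sign
  of \<open>valFc\<close>, which is therefore injective there. A word of \<open>D\<close> of length \<open>2n + 1\<close> has its
  value in the window \<open>W n = [F (2n) - F (2n+1), F (2n))\<close> but, for \<open>n > 0\<close>, not in \<open>W (n - 1)\<close>:
  the excluded prefixes 000 and 101 cut the values down to exactly this annulus. The windows
  increase and exhaust \<open>\<int>\<close>, so the annuli partition \<open>\<int>\<close>; this gives injectivity, and each
  annulus is filled by the surjectivity of \<open>valF\<close>.\<close>

lemma fibc_pos: "fibc n \<ge> 1"
  by (induction n rule: fibc.induct) simp_all

lemma fibc_less_Suc: "fibc n < fibc (Suc n)"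
  using fibc_pos[of "n - 1"] by (cases n) simp_all

lemma fibc_mono: "m \<le> n \<Longrightarrow> fibc m \<le> fibc n"
  by (rule lift_Suc_mono_le[of fibc]) (auto intro: less_imp_le fibc_less_Suc)

lemma fibc_ge: "fibc n \<ge> int n + 1"
  by (induction n rule: fibc.induct) auto

definition valF :: "nat list \<Rightarrow> int" where
  "valF w = (\<Sum>i<length w. digit w i * fibc i)"

lemma valF_Nil [simp]: "valF [] = 0"
  by (simp add: valF_def)

lemma valF_Cons [simp]: "valF (a # w) = int a * fibc (length w) + valF w"
proof -
  have "digit (a # w) i = digit w i" if "i < length w" for i
  proof -
    have "length w - i = Suc (length w - 1 - i)" using that by simp
    then show ?thesis by (simp add: digit_def)
  qed
  then have "(\<Sum>i<length w. digit (a # w) i * fibc i) = valF w"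
    unfolding valF_def by (intro sum.cong) auto
  then show ?thesis by (simp add: valF_def digit_def)
qed

lemma valFc_Cons: "valFc (a # w) = valF (a # w) - int a * fibc (Suc (length w))"
  unfolding valFc_def valF_def[symmetric] by (simp add: digit_def)

fun zeckendorf :: "nat list \<Rightarrow> bool" where
  "zeckendorf [] = True"
| "zeckendorf [a] = (a \<le> 1)"
| "zeckendorf (a # b # w) = (a \<le> 1 \<and> (a = 1 \<longrightarrow> b = 0) \<and> zeckendorf (b # w))"

lemma zeckendorf_ConsD: "zeckendorf (a # w) \<Longrightarrow> a \<le> 1 \<and> zeckendorf w"
  by (cases w) auto

lemma zeckendorf_Cons_0 [simp]: "zeckendorf (0 # w) = zeckendorf w"
  by (cases w) auto

lemma factor_11_Cons_Cons:
  "(\<exists>u v. a # b # w = u @ [1, 1] @ v) \<longleftrightarrow> a = 1 \<and> b = 1 \<or> (\<exists>u v. b # w = u @ [1, 1] @ v)"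
proof
  assume "\<exists>u v. a # b # w = u @ [1, 1] @ v"
  then obtain u v where "a # b # w = u @ [1, 1] @ v" by blast
  then show "a = 1 \<and> b = 1 \<or> (\<exists>u v. b # w = u @ [1, 1] @ v)"
    by (cases u) auto
next
  assume "a = 1 \<and> b = 1 \<or> (\<exists>u v. b # w = u @ [1, 1] @ v)"
  then show "\<exists>u v. a # b # w = u @ [1, 1] @ v"
    by (metis append_Cons append_Nil)
qed

lemma zeckendorf_iff: "zeckendorf w \<longleftrightarrow> set w \<subseteq> {0, 1} \<and> \<not> (\<exists>u v. w = u @ [1, 1] @ v)"
proof (induction w rule: zeckendorf.induct)
  case (2 a)
  have "[a] \<noteq> u @ [1, 1] @ v" for u v :: "nat list"
    using arg_cong[of "[a]" "u @ [1, 1] @ v" length] by auto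
  then show ?case by auto
next
  case (3 a b w)
  then show ?case unfolding factor_11_Cons_Cons by auto
qed simp

lemma valF_bounds: "zeckendorf u \<Longrightarrow> 0 \<le> valF u \<and> valF u < fibc (length u)"
proof (induction u rule: induct_list012)
  case (3 a b w)
  then show ?case
    using fibc_pos[of "length w"] fibc_pos[of "Suc (length w)"] by (cases a) auto
qed auto

lemma valF_inj:
  "\<lbrakk>zeckendorf u; zeckendorf v; length u = length v; valF u = valF v\<rbrakk> \<Longrightarrow> u = v"
proof (induction u arbitrary: v)
  case (Cons a u)
  then obtain b v' where v: "v = b # v'" by (cases v) auto
  have zu: "zeckendorf u" "a \<le> 1" and zv: "zeckendorf v'" "b \<le> 1"
    using Cons.prems v zeckendorf_ConsD by blast+
  have "a = b"
  proof (rule ccontr)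
    assume "a \<noteq> b"
    with zu zv have "a = 0 \<and> b = 1 \<or> a = 1 \<and> b = 0" by auto
    moreover have "valF (a # u) = valF (b # v')" "length v' = length u"
      using Cons.prems v by simp_all
    ultimately show False
      using valF_bounds[OF zu(1)] valF_bounds[OF zv(1)] by auto
  qed
  moreover have "u = v'"
    using Cons.IH[OF zu(1) zv(1)] Cons.prems v \<open>a = b\<close> by simp
  ultimately show ?case using v by simp
qed simp

lemma valF_surj: "0 \<le> x \<Longrightarrow> x < fibc n \<Longrightarrow> \<exists>u. zeckendorf u \<and> length u = n \<and> valF u = x"
proof (induction n arbitrary: x rule: fibc.induct)
  case 1
  then show ?case by (intro exI[of _ "[]"]) simp
next
  case 2
  then have "x = 0 \<or> x = 1" by auto
  then show ?case by (intro exI[of _ "[nat x]"]) auto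
next
  case (3 n)
  show ?case
  proof (cases "x < fibc (Suc n)")
    case True
    with 3 obtain u where "zeckendorf u" "length u = Suc n" "valF u = x" by blast
    then show ?thesis by (intro exI[of _ "0 # u"]) simp
  next
    case False
    then have "0 \<le> x - fibc (Suc n)" "x - fibc (Suc n) < fibc n" using "3.prems" by auto
    with "3.IH"(2) obtain u where "zeckendorf u" "length u = n" "valF u = x - fibc (Suc n)"
      by blast
    then show ?thesis by (intro exI[of _ "1 # 0 # u"]) simp
  qed
qed

lemma inj_on_valFc_zeckendorf: "inj_on valFc {w. zeckendorf w \<and> length w = n}"
proof (rule inj_onI, clarsimp)
  fix w w' assume z: "zeckendorf w" "zeckendorf w'" and len: "length w' = length w"
    and eq: "valFc w = valFc w'"
  show "w = w'"
  proof (cases w)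
    case Nil
    then show ?thesis using len by simp
  next
    case (Cons a u)
    with len obtain b v where w': "w' = b # v" by (cases w') auto
    have ab: "a \<le> 1" "b \<le> 1" using z Cons w' zeckendorf_ConsD by blast+
    have bounds: "0 \<le> valF w" "valF w < fibc (Suc (length u))"
      "0 \<le> valF w'" "valF w' < fibc (Suc (length u))"
      using valF_bounds[OF z(1)] valF_bounds[OF z(2)] Cons w' len by auto
    have "a = b"
      using ab bounds eq len unfolding Cons w' valFc_Cons by (cases a; cases b) auto
    then have "valF w = valF w'" using eq len unfolding Cons w' valFc_Cons by simp
    then show ?thesis using valF_inj z len by simp
  qed
qed

lemma Dset_zeckendorf:
  "w \<in> Dset \<longleftrightarrow> zeckendorf w \<and> odd (length w)
     \<and> \<not> (\<exists>v. w = 0 # 0 # 0 # v) \<and> \<not> (\<exists>v. w = 1 # 0 # 1 # v)"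
  unfolding Dset_def zeckendorf_iff by (simp add: conj_ac)

lemma Dset_iff:
  "w \<in> Dset \<longleftrightarrow> w = [1]
     \<or> (\<exists>u. w = 0 # u \<and> zeckendorf u \<and> even (length u) \<and> \<not> (\<exists>v. u = 0 # 0 # v))
     \<or> (\<exists>u. w = 1 # 0 # 0 # u \<and> zeckendorf u \<and> even (length u))"
proof -
  consider "w = []" | a where "w = [a]" | a b where "w = [a, b]" | a b c v where "w = a # b # c # v"
    by (metis list.exhaust)
  then show ?thesis
    by cases (auto simp: Dset_zeckendorf le_Suc_eq dest: zeckendorf_ConsD)
qed

lemma valFc_Cons_0 [simp]: "valFc (0 # u) = valF u"
  by (simp add: valFc_Cons)

lemma fibc_le_valF:
  assumes "zeckendorf u" "\<not> (\<exists>v. u = 0 # 0 # v)" "length u = k + 2"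
  shows "fibc k \<le> valF u"
proof -
  obtain a b v where u: "u = a # b # v" and v: "length v = k"
    using assms(3) by (metis add_2_eq_Suc' length_Suc_conv)
  have z: "zeckendorf (b # v)" "zeckendorf v" "a \<le> 1" "b \<le> 1"
    using assms(1) u zeckendorf_ConsD by blast+
  then consider "a = 1" | "a = 0" "b = 1" using assms(2) u by fastforce
  then show ?thesis
  proof cases
    case 1
    then show ?thesis using valF_bounds[OF z(1)] fibc_mono[of k "Suc k"] u v by simp
  next
    case 2
    then show ?thesis using valF_bounds[OF z(2)] u v by simp
  qed
qed

text \<open>The image under \<open>valFc\<close> of the words of \<open>D\<close> of length at most \<open>2n+1\<close>.\<close>

definition valFc_window :: "nat \<Rightarrow> int set" where
  "valFc_window n = {fibc (2 * n) - fibc (2 * n + 1) ..< fibc (2 * n)}"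

lemma valFc_window_mono: "k \<le> n \<Longrightarrow> valFc_window k \<subseteq> valFc_window n"
proof (rule lift_Suc_mono_le[of valFc_window])
  fix n
  show "valFc_window n \<subseteq> valFc_window (Suc n)"
    using fibc_mono[of "2 * n" "Suc (2 * n)"] fibc_pos[of "2 * n"]
    by (auto simp: valFc_window_def)
qed

lemma ex_valFc_window: "\<exists>n. x \<in> valFc_window n"
proof
  let ?n = "nat \<bar>x\<bar>"
  have "fibc (2 * ?n + 1) - fibc (2 * ?n) \<ge> int ?n"
    using fibc_ge[of "2 * ?n - 1"] by (cases ?n) auto
  moreover have "fibc (2 * ?n) \<ge> int (2 * ?n) + 1" by (rule fibc_ge)
  ultimately show "x \<in> valFc_window ?n"
    unfolding valFc_window_def by (simp, linarith)
qed

lemma valFc_Dset_in_window: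
  assumes "w \<in> Dset" "length w = 2 * n + 1"
  shows "valFc w \<in> valFc_window n"
  using assms(1) unfolding Dset_iff
proof (elim disjE exE conjE)
  assume "w = [1]"
  then show ?thesis using assms(2) by (simp add: valFc_Cons valFc_window_def)
next
  fix u assume "w = 0 # u" "zeckendorf u"
  then show ?thesis
    using assms(2) valF_bounds[of u] fibc_mono[of "2 * n" "2 * n + 1"]
    by (auto simp: valFc_window_def)
next
  fix u assume w: "w = 1 # 0 # 0 # u" "zeckendorf u"
  then obtain m where "n = Suc m" "length u = 2 * m" using assms(2) by (cases n) auto
  then show ?thesis
    using w valF_bounds[of u] fibc_pos[of "Suc (2 * m)"] by (auto simp: valFc_window_def valFc_Cons)
qed

lemma valFc_Dset_notin_window:
  assumes "w \<in> Dset" "length w = 2 * n + 3"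
  shows "valFc w \<notin> valFc_window n"
  using assms(1) unfolding Dset_iff
proof (elim disjE exE conjE)
  assume "w = [1]"
  then show ?thesis using assms(2) by simp
next
  fix u assume "w = 0 # u" "zeckendorf u" "\<not> (\<exists>v. u = 0 # 0 # v)"
  then show ?thesis
    using assms(2) fibc_le_valF[of u "2 * n"] by (auto simp: valFc_window_def)
next
  fix u assume "w = 1 # 0 # 0 # u" "zeckendorf u"
  then show ?thesis
    using assms(2) valF_bounds[of u] by (auto simp: valFc_window_def valFc_Cons)
qed

lemma valFc_Dset_length_less:
  assumes "w \<in> Dset" "w' \<in> Dset" "length w < length w'"
  shows "valFc w \<noteq> valFc w'"
proof -
  obtain n where n: "length w = 2 * n + 1"
    using assms(1) by (auto simp: Dset_zeckendorf elim!: oddE)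
  obtain k where k: "length w' = 2 * k + 1"
    using assms(2) by (auto simp: Dset_zeckendorf elim!: oddE)
  obtain m where m: "length w' = 2 * m + 3" "n \<le> m"
    using assms(3) n k by (intro that[of "k - 1"]) auto
  have "valFc w \<in> valFc_window m"
    using valFc_Dset_in_window[OF assms(1) n] valFc_window_mono[OF m(2)] by blast
  then show ?thesis using valFc_Dset_notin_window[OF assms(2) m(1)] by auto
qed

lemma inj_on_valFc_Dset: "inj_on valFc Dset"
proof (rule inj_onI)
  fix w w' assume D: "w \<in> Dset" "w' \<in> Dset" and eq: "valFc w = valFc w'"
  then have "length w = length w'"
    using valFc_Dset_length_less by (metis linorder_neqE_nat)
  then show "w = w'"
    using D eq inj_on_valFc_zeckendorf[of "length w"]
    by (auto simp: Dset_zeckendorf dest: inj_onD)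
qed

lemma valFc_window_0_subset: "valFc_window 0 \<subseteq> valFc ` Dset"
proof -
  have "[0] \<in> Dset" "[1] \<in> Dset" by (simp_all add: Dset_iff)
  moreover have "valFc [0] = 0" "valFc [1] = -1" by (simp_all add: valFc_Cons)
  moreover have "valFc_window 0 = {-1, 0}" by (auto simp: valFc_window_def)
  ultimately show ?thesis by (metis empty_subsetI image_eqI insert_subset)
qed

lemma valFc_window_Suc_diff_subset:
  "valFc_window (Suc m) - valFc_window m \<subseteq> valFc ` Dset"
proof
  fix x assume x: "x \<in> valFc_window (Suc m) - valFc_window m"
  show "x \<in> valFc ` Dset"
  proof (cases "0 \<le> x")
    case True
    then have "fibc (2 * m) \<le> x" "x < fibc (2 * m + 2)"
      using x fibc_less_Suc[of "2 * m"] by (auto simp: valFc_window_def)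
    then obtain u where u: "zeckendorf u" "length u = 2 * m + 2" "valF u = x"
      using valF_surj True by blast
    have "\<not> (\<exists>v. u = 0 # 0 # v)"
      using u \<open>fibc (2 * m) \<le> x\<close> valF_bounds by force
    then have "0 # u \<in> Dset" using u by (simp add: Dset_iff)
    then show ?thesis using u by force
  next
    case False
    then have "0 \<le> x + fibc (2 * m + 1)" "x + fibc (2 * m + 1) < fibc (2 * m)"
      using x fibc_pos[of "2 * m"] by (auto simp: valFc_window_def)
    then obtain u where u: "zeckendorf u" "length u = 2 * m" "valF u = x + fibc (2 * m + 1)"
      using valF_surj by blast
    then have "1 # 0 # 0 # u \<in> Dset" by (simp add: Dset_iff)
    moreover have "valFc (1 # 0 # 0 # u) = x" using u by (simp add: valFc_Cons)
    ultimately show ?thesis by force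
  qed
qed

lemma valFc_Dset_surj: "valFc ` Dset = UNIV"
proof -
  have "x \<in> valFc ` Dset" for x
  proof -
    obtain n where x: "x \<in> valFc_window n" and least: "\<forall>k<n. x \<notin> valFc_window k"
      using ex_valFc_window[of x] exists_least_iff[of "\<lambda>n. x \<in> valFc_window n"] by blast
    show ?thesis
    proof (cases n)
      case 0
      then show ?thesis using x valFc_window_0_subset by blast
    next
      case (Suc m)
      then show ?thesis using x least valFc_window_Suc_diff_subset by blast
    qed
  qed
  then show ?thesis by blast
qed

theorem proposition2p3:
  shows "bij_betw valFc Dset (UNIV :: int set)"
  unfolding bij_betw_def using inj_on_valFc_Dset valFc_Dset_surj by blast

end
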